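(* Assume Conditions A, B, C with $k=k_1+1>1$ and suppose $N:=\inf_{\lambda\in\mathbb{R}}\min_{|e|=1}H(e,\lambda e\otimes e-I)$ satisfies $-\infty<N<0$. Let $\mu>0$, $R>0$, fix $z\in\mathbb{R}^n$, $r=|x-z|$, $c_k=\left(\frac{k+1}{k-1}\right)^k$, and $E=\frac{R^{k+1}}{c_k\mu^{k-1}(k-1)|N|}$. Then the function $$w(x,t)=\frac{\mu\left[1-(r/R)^{(k+1)/k}\right]^{k/(k-1)}}{(1+t/E)^{1/(k-1)}}$$ is nonnegative, vanishes on $|x-z|=R$, satisfies $w(z,t)=\mu(1+t/E)^{-1/(k-1)}$, and is a viscosity sub-solution of $H(Dw,D^2w)-w_t\ge0$ in $B_R(z)\times(0,T)$ for every $T>0$.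
   Context: $S^{n\times n}$ denotes the real symmetric matrices with the usual order, $I$ the identity, $O$ the zero matrix, $(e\otimes e)_{ij}=e_ie_j$. $H:\mathbb{R}^n\times S^{n\times n}\to\mathbb{R}$ is continuous and satisfies: Condition A: $H(q,X)\le H(q,Y)$ when $X\le Y$ and $H(q,O)=0$. Condition B: there is $k_1\ge0$ with $H(\theta q,X)=|\theta|^{k_1}H(q,X)$ for all $\theta\in\mathbb{R}$ and $H(q,\theta X)=\theta H(q,X)$ for $\theta>0$. Condition C: $\max_{|e|=1}H(e,-I)<0<\min_{|e|=1}H(e,I)$ and $\sup_{\lambda\in\mathbb{R}}\max_{|e|=1}H(e,\lambda e\otimes e+I)<\infty$. $B_R(z)$ is the open ball of radius $R$ about $z$. *)

theory Defs
  imports "HOL-Analysis.Analysis"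
begin

definition sym_mat :: "real^'n^'n \<Rightarrow> bool" where
  "sym_mat X \<longleftrightarrow> transpose X = X"

definition mat_le :: "real^'n^'n \<Rightarrow> real^'n^'n \<Rightarrow> bool" where
  "mat_le X Y \<longleftrightarrow> (\<forall>v. 0 \<le> v \<bullet> ((Y - X) *v v))"

definition outer :: "real^'n \<Rightarrow> real^'n^'n" where
  "outer e = (\<chi> i j. e$i * e$j)"

definition condA :: "(real^'n \<Rightarrow> real^'n^'n \<Rightarrow> real) \<Rightarrow> bool" where
  "condA H \<longleftrightarrow>
     (\<forall>q X Y. sym_mat X \<and> sym_mat Y \<and> mat_le X Y \<longrightarrow> H q X \<le> H q Y) \<and>
     (\<forall>q. H q 0 = 0)"

definition condB :: "(real^'n \<Rightarrow> real^'n^'n \<Rightarrow> real) \<Rightarrow> real \<Rightarrow> bool" where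
  "condB H k1 \<longleftrightarrow> 0 \<le> k1 \<and>
     (\<forall>\<theta> q X. sym_mat X \<longrightarrow> H (\<theta> *\<^sub>R q) X = \<bar>\<theta>\<bar> powr k1 * H q X) \<and>
     (\<forall>\<theta> q X. sym_mat X \<and> \<theta> > 0 \<longrightarrow> H q (\<theta> *\<^sub>R X) = \<theta> * H q X)"

definition condC :: "(real^'n \<Rightarrow> real^'n^'n \<Rightarrow> real) \<Rightarrow> bool" where
  "condC H \<longleftrightarrow>
     (SUP e\<in>sphere 0 1. H e (- mat 1)) < 0 \<and>
     0 < (INF e\<in>sphere 0 1. H e (mat 1)) \<and>
     (\<exists>M. \<forall>l. \<forall>e\<in>sphere 0 1. H e (l *\<^sub>R outer e + mat 1) \<le> M)"

definition usc_on :: "('a::metric_space \<Rightarrow> real) \<Rightarrow> 'a set \<Rightarrow> bool" where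
  "usc_on f S \<longleftrightarrow> (\<forall>p\<in>S. \<forall>\<epsilon>>0. \<exists>\<delta>>0. \<forall>q\<in>S. dist q p < \<delta> \<longrightarrow> f q < f p + \<epsilon>)"

definition test_fun ::
  "(real^'n \<Rightarrow> real \<Rightarrow> real) \<Rightarrow> (real^'n \<Rightarrow> real \<Rightarrow> real^'n) \<Rightarrow>
   (real^'n \<Rightarrow> real \<Rightarrow> real^'n^'n) \<Rightarrow> (real^'n \<Rightarrow> real \<Rightarrow> real) \<Rightarrow>
   ((real^'n) \<times> real) set \<Rightarrow> bool" where
  "test_fun phi Dphi D2phi phit U \<longleftrightarrow> open U \<and>
     (\<forall>(x,t)\<in>U. ((\<lambda>y. phi y t) has_derivative (\<lambda>h. Dphi x t \<bullet> h)) (at x) \<and>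
                ((\<lambda>y. Dphi y t) has_derivative (\<lambda>h. D2phi x t *v h)) (at x) \<and>
                ((\<lambda>s. phi x s) has_real_derivative phit x t) (at t)) \<and>
     continuous_on U (\<lambda>(x,t). phi x t) \<and> continuous_on U (\<lambda>(x,t). Dphi x t) \<and>
     continuous_on U (\<lambda>(x,t). D2phi x t) \<and> continuous_on U (\<lambda>(x,t). phit x t)"

definition visc_subsol ::
  "(real^'n \<Rightarrow> real^'n^'n \<Rightarrow> real) \<Rightarrow> (real^'n \<Rightarrow> real \<Rightarrow> real) \<Rightarrow>
   (real^'n) set \<Rightarrow> real \<Rightarrow> bool" where
  "visc_subsol H w \<Omega> T \<longleftrightarrow>
     usc_on (\<lambda>(x,t). w x t) (\<Omega> \<times> {0<..<T}) \<and>
     (\<forall>x0 t0 phi Dphi D2phi phit U.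
        x0 \<in> \<Omega> \<and> t0 \<in> {0<..<T} \<and> (x0,t0) \<in> U \<and>
        test_fun phi Dphi D2phi phit U \<and>
        (\<forall>(x,t)\<in>U \<inter> (\<Omega> \<times> {0<..<T}). w x t - phi x t \<le> w x0 t0 - phi x0 t0)
        \<longrightarrow> H (Dphi x0 t0) (D2phi x0 t0) - phit x0 t0 \<ge> 0)"

end

theory Submission
  imports Defs
begin

text \<open>
  The barrier separates as \<open>w x t = F \<bar>x - z\<bar> * G t\<close>. Where a test function \<open>\<phi>\<close> touches \<open>w\<close>
  from above at \<open>(x\<^sub>0, t\<^sub>0)\<close>, restricting to lines through \<open>x\<^sub>0\<close> gives \<open>\<phi>\<^sub>t = w\<^sub>t\<close>,
  \<open>D\<phi> = Dw\<close> and \<open>(D\<^sup>2\<phi> v) \<bullet> v \<ge> (D\<^sup>2w v) \<bullet> v\<close>. Off the centre \<open>D\<^sup>2w\<close> is the radial matrix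
  \<open>\<alpha> e\<otimes>e + (F' G / r) (I - e\<otimes>e)\<close> with \<open>F' < 0\<close>, a positive multiple of \<open>\<lambda> e\<otimes>e - I\<close>, so
  monotonicity and homogeneity of \<open>H\<close> give \<open>H (D\<phi>) (D\<^sup>2\<phi>) \<ge> \<bar>F' G\<bar>\<^sup>k N / r\<close>; the profile
  and the time scale are chosen so that this is exactly \<open>F G' = w\<^sub>t\<close>. At the centre \<open>F\<close> is
  flat, so \<open>D\<phi> = 0\<close> and \<open>H 0 (D\<^sup>2\<phi>) = 0 \<ge> w\<^sub>t\<close>. Monotonicity of \<open>H\<close> needs \<open>D\<^sup>2\<phi>\<close> to be
  symmetric, which is Schwarz's theorem, proved from a mean value estimate of the mixed
  second difference.
\<close>

section \<open>Touching from above along lines\<close>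

lemma eventually_along_line:
  fixes x v :: "'a::real_normed_vector"
  assumes "eventually P (nhds x)"
  shows "\<forall>\<^sub>F s in nhds 0. P (x + s *\<^sub>R v)"
proof -
  have "((\<lambda>s. x + s *\<^sub>R v) \<longlongrightarrow> x + 0 *\<^sub>R v) (nhds 0)"
    by (intro tendsto_add tendsto_const tendsto_scaleR filterlim_ident)
  then have "((\<lambda>s. x + s *\<^sub>R v) \<longlongrightarrow> x) (nhds 0)"
    by simp
  then show ?thesis
    by (rule eventually_compose_filterlim[OF assms])
qed

lemma has_real_derivative_along_line:
  assumes "(f has_derivative f') (at (x + s *\<^sub>R v))"
  shows "((\<lambda>s. f (x + s *\<^sub>R v)) has_real_derivative f' v) (at s)"
proof -
  have "((\<lambda>s. x + s *\<^sub>R v) has_derivative (\<lambda>h. h *\<^sub>R v)) (at s)"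
    by (auto intro!: derivative_eq_intros)
  from has_derivative_compose[OF this assms]
  have "((\<lambda>s. f (x + s *\<^sub>R v)) has_derivative (\<lambda>h. f' (h *\<^sub>R v))) (at s)"
    by (simp add: o_def)
  moreover have "(\<lambda>h. f' (h *\<^sub>R v)) = (*) (f' v)"
    using linear_scale[OF has_derivative_linear[OF assms]] by (simp add: fun_eq_iff mult.commute)
  ultimately show ?thesis
    by (simp add: has_field_derivative_def)
qed

lemma DERIV_local_max_diff:
  fixes f g :: "real \<Rightarrow> real"
  assumes "\<forall>\<^sub>F s in nhds x. f s - g s \<le> f x - g x"
    and "(f has_real_derivative f') (at x)" and "(g has_real_derivative g') (at x)"
  shows "f' = g'"
proof -
  obtain d where "d > 0" and "\<forall>s. dist s x < d \<longrightarrow> f s - g s \<le> f x - g x"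
    using assms(1) unfolding eventually_nhds_metric by blast
  then have "g' - f' = 0"
    by (intro DERIV_local_min[OF DERIV_diff[OF assms(3,2)], of d])
       (auto simp: dist_real_def abs_minus_commute)
  then show ?thesis by simp
qed

lemma DERIV_local_min_second_order:
  fixes g g' :: "real \<Rightarrow> real"
  assumes "\<forall>\<^sub>F s in nhds x. g x \<le> g s"
    and "\<forall>\<^sub>F s in nhds x. (g has_real_derivative g' s) (at s)"
    and "(g' has_real_derivative g'') (at x)"
  shows "0 \<le> g''"
proof (rule ccontr)
  assume "\<not> 0 \<le> g''"
  obtain d where d: "d > 0"
    and near: "\<And>s. dist s x < d \<Longrightarrow> g x \<le> g s \<and> (g has_real_derivative g' s) (at s)"
    using eventually_conj[OF assms(1,2)] unfolding eventually_nhds_metric by blast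
  have "g' x = 0"
    using DERIV_local_min[of g "g' x" x d] near d by (auto simp: dist_real_def abs_minus_commute)
  have "((\<lambda>h. (g' (x + h) - g' x) / h) \<longlongrightarrow> g'') (at 0)"
    using assms(3) by (simp add: DERIV_def)
  moreover have "g'' < 0" using \<open>\<not> 0 \<le> g''\<close> by simp
  ultimately have "\<forall>\<^sub>F h in at 0. (g' (x + h) - g' x) / h < 0"
    by (rule order_tendstoD(2))
  then obtain e where e: "e > 0" and quot: "\<And>h. h \<noteq> 0 \<Longrightarrow> dist h 0 < e \<Longrightarrow> (g' (x + h) - g' x) / h < 0"
    unfolding eventually_at by blast
  define s where "s = min e d / 2"
  have s: "0 < s" "s < e" "s < d" using e d by (auto simp: s_def)
  have "\<forall>t. x \<le> t \<and> t \<le> x + s \<longrightarrow> (g has_real_derivative g' t) (at t)"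
    using near s by (auto simp: dist_real_def)
  then obtain y where y: "x < y" "y < x + s" and mvt: "g (x + s) - g x = s * g' y"
    using MVT2[of x "x + s" g g'] s by auto
  have "(g' (x + (y - x)) - g' x) / (y - x) < 0"
    using quot[of "y - x"] y s by (simp add: dist_real_def)
  then have "g' y < 0"
    using \<open>g' x = 0\<close> y by (simp add: divide_less_0_iff)
  then have "s * g' y < 0"
    using s by (simp add: mult_pos_neg)
  then have "g (x + s) < g x"
    using mvt by simp
  with near[of "x + s"] s show False by (simp add: dist_real_def)
qed

lemma touching_along_line_first_order:
  fixes f \<phi> :: "'a::real_normed_vector \<Rightarrow> real"
  assumes max: "\<forall>\<^sub>F y in nhds x. f y - \<phi> y \<le> f x - \<phi> x"
    and \<phi>: "(\<phi> has_derivative \<phi>') (at x)"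
    and f: "((\<lambda>s. f (x + s *\<^sub>R v)) has_real_derivative f') (at 0)"
  shows "\<phi>' v = f'"
proof -
  have "((\<lambda>s. \<phi> (x + s *\<^sub>R v)) has_real_derivative \<phi>' v) (at 0)"
    using has_real_derivative_along_line[of \<phi> \<phi>' x 0 v] \<phi> by simp
  then have "f' = \<phi>' v"
    using DERIV_local_max_diff[where f="\<lambda>s. f (x + s *\<^sub>R v)" and g="\<lambda>s. \<phi> (x + s *\<^sub>R v)" and x=0]
      f eventually_along_line[OF max, of v]
    by simp
  then show ?thesis by simp
qed

lemma touching_along_line_second_order:
  fixes f \<phi> :: "'a::real_inner \<Rightarrow> real"
  assumes max: "\<forall>\<^sub>F y in nhds x. f y - \<phi> y \<le> f x - \<phi> x"
    and \<phi>: "\<forall>\<^sub>F y in nhds x. (\<phi> has_derivative (\<lambda>h. D\<phi> y \<bullet> h)) (at y)"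
    and D\<phi>: "(D\<phi> has_derivative D2) (at x)"
    and f: "\<forall>\<^sub>F s in nhds 0. ((\<lambda>s. f (x + s *\<^sub>R v)) has_real_derivative f' s) (at s)"
    and f': "(f' has_real_derivative f'') (at 0)"
  shows "f'' \<le> D2 v \<bullet> v"
proof -
  define g where "g s = \<phi> (x + s *\<^sub>R v) - f (x + s *\<^sub>R v)" for s
  have "\<forall>\<^sub>F s in nhds 0. g 0 \<le> g s"
    using eventually_along_line[OF max, of v] by (elim eventually_mono) (simp add: g_def)
  moreover have "\<forall>\<^sub>F s in nhds 0. (g has_real_derivative D\<phi> (x + s *\<^sub>R v) \<bullet> v - f' s) (at s)"
    using eventually_conj[OF eventually_along_line[OF \<phi>, of v] f]
  proof eventually_elim
    case (elim s)
    show ?case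
      unfolding g_def
      by (rule DERIV_diff[OF has_real_derivative_along_line[OF elim[THEN conjunct1]] elim[THEN conjunct2]])
  qed
  moreover have "((\<lambda>s. D\<phi> (x + s *\<^sub>R v) \<bullet> v - f' s) has_real_derivative D2 v \<bullet> v - f'') (at 0)"
  proof -
    have "((\<lambda>y. D\<phi> y \<bullet> v) has_derivative (\<lambda>h. D2 h \<bullet> v)) (at (x + 0 *\<^sub>R v))"
      using has_derivative_inner_left[OF D\<phi>] by simp
    from DERIV_diff[OF has_real_derivative_along_line[OF this] f'] show ?thesis .
  qed
  ultimately have "0 \<le> D2 v \<bullet> v - f''"
    by (rule DERIV_local_min_second_order)
  then show ?thesis by simp
qed

lemma eventually_nhds_Pair_slices:
  assumes "eventually P (nhds (x, t))"
  shows "\<forall>\<^sub>F y in nhds x. P (y, t)" and "\<forall>\<^sub>F s in nhds t. P (x, s)"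
proof -
  have "((\<lambda>y. (y, t)) \<longlongrightarrow> (x, t)) (nhds x)" "((\<lambda>s. (x, s)) \<longlongrightarrow> (x, t)) (nhds t)"
    by (intro tendsto_Pair filterlim_ident tendsto_const)+
  then show "\<forall>\<^sub>F y in nhds x. P (y, t)" "\<forall>\<^sub>F s in nhds t. P (x, s)"
    using eventually_compose_filterlim[OF assms] by blast+
qed

section \<open>Symmetry of the Hessian\<close>

lemma linear_approximation_difference:
  fixes g :: "'a::real_normed_vector \<Rightarrow> 'b::real_normed_vector"
  assumes approx: "\<And>y. norm (y - x) < d \<Longrightarrow> norm (g y - g x - L (y - x)) \<le> \<epsilon> * norm (y - x)"
    and "linear L" and "norm (y1 - x) < d" and "norm (y2 - x) < d"
  shows "norm (g y1 - g y2 - L (y1 - y2)) \<le> \<epsilon> * (norm (y1 - x) + norm (y2 - x))"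
proof -
  have "g y1 - g y2 - L (y1 - y2) = (g y1 - g x - L (y1 - x)) - (g y2 - g x - L (y2 - x))"
    using linear_diff[OF \<open>linear L\<close>, of "y1 - x" "y2 - x"] by (simp add: algebra_simps)
  also have "norm \<dots> \<le> \<epsilon> * norm (y1 - x) + \<epsilon> * norm (y2 - x)"
    by (rule order_trans[OF norm_triangle_ineq4 add_mono]) (use approx assms(3,4) in auto)
  finally show ?thesis by (simp add: distrib_left)
qed

lemma mixed_difference_mean_value:
  fixes f :: "'a::real_inner \<Rightarrow> real"
  assumes grad: "\<And>y. dist y x < e \<Longrightarrow> (f has_derivative (\<lambda>h. Df y \<bullet> h)) (at y)"
    and "0 < s" and small: "s * (norm u + norm v) < e"
  shows "\<exists>\<xi>>0. \<xi> < s \<and> f (x + s *\<^sub>R v + s *\<^sub>R u) - f (x + s *\<^sub>R u) - f (x + s *\<^sub>R v) + f x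
           = s * ((Df (x + s *\<^sub>R v + \<xi> *\<^sub>R u) - Df (x + \<xi> *\<^sub>R u)) \<bullet> u)"
proof -
  have near: "dist (x + c *\<^sub>R v + \<tau> *\<^sub>R u) x < e" if "0 \<le> \<tau>" "\<tau> \<le> s" "0 \<le> c" "c \<le> s" for \<tau> c
  proof -
    have "dist (x + c *\<^sub>R v + \<tau> *\<^sub>R u) x \<le> c * norm v + \<tau> * norm u"
      using norm_triangle_ineq[of "c *\<^sub>R v" "\<tau> *\<^sub>R u"] that by (simp add: dist_norm add.assoc)
    also have "\<dots> \<le> s * (norm u + norm v)"
      using that mult_right_mono[of \<tau> s "norm u"] mult_right_mono[of c s "norm v"]
      by (simp add: distrib_left)
    finally show ?thesis using small by simp
  qed
  define m where "m = (\<lambda>\<tau>. f (x + s *\<^sub>R v + \<tau> *\<^sub>R u) - f (x + \<tau> *\<^sub>R u))"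
  define m' where "m' = (\<lambda>\<tau>. (Df (x + s *\<^sub>R v + \<tau> *\<^sub>R u) - Df (x + \<tau> *\<^sub>R u)) \<bullet> u)"
  have "(m has_real_derivative m' \<tau>) (at \<tau>)" if "0 \<le> \<tau>" "\<tau> \<le> s" for \<tau>
  proof -
    have "dist (x + s *\<^sub>R v + \<tau> *\<^sub>R u) x < e" "dist (x + \<tau> *\<^sub>R u) x < e"
      using near[of \<tau> s] near[of \<tau> 0] that \<open>0 < s\<close> by simp_all
    from DERIV_diff[OF has_real_derivative_along_line[OF grad[OF this(1)]]
                       has_real_derivative_along_line[OF grad[OF this(2)]]]
    show ?thesis unfolding m_def m'_def by (simp add: inner_diff_left)
  qed
  then obtain \<xi> where "0 < \<xi>" "\<xi> < s" and "m s - m 0 = s * m' \<xi>"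
    using MVT2[of 0 s m m'] \<open>0 < s\<close> by auto
  then show ?thesis
    by (intro exI[of _ \<xi>]) (simp add: m_def m'_def algebra_simps)
qed

lemma mixed_difference_estimate:
  fixes f :: "'a::real_inner \<Rightarrow> real"
  assumes grad: "\<forall>\<^sub>F y in nhds x. (f has_derivative (\<lambda>h. Df y \<bullet> h)) (at y)"
    and hess: "(Df has_derivative D2) (at x)" and "\<epsilon> > 0"
  shows "\<forall>\<^sub>F s in at_right 0.
    \<bar>f (x + s *\<^sub>R v + s *\<^sub>R u) - f (x + s *\<^sub>R u) - f (x + s *\<^sub>R v) + f x - s\<^sup>2 * (D2 v \<bullet> u)\<bar>
      \<le> \<epsilon> * s\<^sup>2 * ((2 * norm u + norm v) * norm u)"
proof -
  obtain e where "e > 0" and grad_e: "\<And>y. dist y x < e \<Longrightarrow> (f has_derivative (\<lambda>h. Df y \<bullet> h)) (at y)"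
    using grad unfolding eventually_nhds_metric by blast
  obtain d where "d > 0"
    and approx: "\<And>y. norm (y - x) < d \<Longrightarrow> norm (Df y - Df x - D2 (y - x)) \<le> \<epsilon> * norm (y - x)"
    using hess \<open>\<epsilon> > 0\<close> unfolding has_derivative_at_alt by blast
  have "linear D2" using has_derivative_linear[OF hess] .
  have pos: "0 < norm u + norm v + 1"
    using norm_ge_zero[of u] norm_ge_zero[of v] by linarith
  show ?thesis
    unfolding eventually_at_right_field
  proof (intro exI[of _ "min d e / (norm u + norm v + 1)"] conjI allI impI)
    show "0 < min d e / (norm u + norm v + 1)" using \<open>d > 0\<close> \<open>e > 0\<close> pos by simp
    fix s :: real assume s: "0 < s" "s < min d e / (norm u + norm v + 1)"
    have "s * (norm u + norm v) \<le> s * (norm u + norm v + 1)" using s by simp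
    also have "\<dots> < min d e" using s pos by (simp add: pos_less_divide_eq)
    finally have small: "s * (norm u + norm v) < min d e" .
    then have "s * (norm u + norm v) < e" by simp
    from mixed_difference_mean_value[where x=x and e=e, OF grad_e \<open>0 < s\<close> this]
    obtain \<xi> where \<xi>: "0 < \<xi>" "\<xi> < s" and mvt: "f (x + s *\<^sub>R v + s *\<^sub>R u) - f (x + s *\<^sub>R u) - f (x + s *\<^sub>R v) + f x
        = s * ((Df (x + s *\<^sub>R v + \<xi> *\<^sub>R u) - Df (x + \<xi> *\<^sub>R u)) \<bullet> u)"
      by blast
    define y1 where "y1 = x + s *\<^sub>R v + \<xi> *\<^sub>R u"
    define y2 where "y2 = x + \<xi> *\<^sub>R u"
    have y1: "norm (y1 - x) \<le> s * norm v + \<xi> * norm u"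
      using norm_triangle_ineq[of "s *\<^sub>R v" "\<xi> *\<^sub>R u"] s \<xi> by (simp add: y1_def add.assoc)
    have y2: "norm (y2 - x) = \<xi> * norm u" using \<xi> by (simp add: y2_def)
    have \<xi>u: "\<xi> * norm u \<le> s * norm u" using \<xi> by (simp add: mult_right_mono)
    have "s * norm u + s * norm v < d" "0 \<le> s * norm v"
      using small s by (simp_all add: algebra_simps)
    then have y: "norm (y1 - x) < d" "norm (y2 - x) < d"
      using y1 y2 \<xi>u by linarith+
    have "\<bar>(Df y1 - Df y2) \<bullet> u - s * (D2 v \<bullet> u)\<bar> = \<bar>(Df y1 - Df y2 - D2 (y1 - y2)) \<bullet> u\<bar>"
      using linear_scale[OF \<open>linear D2\<close>, of s v] by (simp add: y1_def y2_def inner_diff_left)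
    also have "\<dots> \<le> norm (Df y1 - Df y2 - D2 (y1 - y2)) * norm u"
      by (rule Cauchy_Schwarz_ineq2)
    also have "\<dots> \<le> \<epsilon> * (s * (2 * norm u + norm v)) * norm u"
    proof (rule mult_right_mono)
      have "norm (y1 - x) + norm (y2 - x) \<le> s * (2 * norm u + norm v)"
        using y1 y2 \<xi>u by (auto simp: algebra_simps)
      with linear_approximation_difference[OF approx \<open>linear D2\<close> y] \<open>\<epsilon> > 0\<close>
      show "norm (Df y1 - Df y2 - D2 (y1 - y2)) \<le> \<epsilon> * (s * (2 * norm u + norm v))"
        by (meson mult_left_mono order_trans less_imp_le)
    qed simp
    finally have bound: "\<bar>(Df y1 - Df y2) \<bullet> u - s * (D2 v \<bullet> u)\<bar> \<le> \<epsilon> * s * ((2 * norm u + norm v) * norm u)"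
      by (simp add: mult_ac)
    have "f (x + s *\<^sub>R v + s *\<^sub>R u) - f (x + s *\<^sub>R u) - f (x + s *\<^sub>R v) + f x - s\<^sup>2 * (D2 v \<bullet> u)
        = s * ((Df y1 - Df y2) \<bullet> u - s * (D2 v \<bullet> u))"
      using mvt by (simp add: y1_def y2_def power2_eq_square algebra_simps)
    then show "\<bar>f (x + s *\<^sub>R v + s *\<^sub>R u) - f (x + s *\<^sub>R u) - f (x + s *\<^sub>R v) + f x - s\<^sup>2 * (D2 v \<bullet> u)\<bar>
        \<le> \<epsilon> * s\<^sup>2 * ((2 * norm u + norm v) * norm u)"
      using mult_left_mono[OF bound, of s] s by (simp add: abs_mult power2_eq_square mult_ac)
  qed
qed

lemma second_derivative_symmetric:
  fixes f :: "'a::real_inner \<Rightarrow> real"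
  assumes grad: "\<forall>\<^sub>F y in nhds x. (f has_derivative (\<lambda>h. Df y \<bullet> h)) (at y)"
    and hess: "(Df has_derivative D2) (at x)"
  shows "D2 v \<bullet> u = D2 u \<bullet> v"
proof -
  define C where "C = (2 * norm u + norm v) * norm u + (2 * norm v + norm u) * norm v"
  have "C \<ge> 0" by (simp add: C_def)
  have "\<bar>D2 v \<bullet> u - D2 u \<bullet> v\<bar> \<le> 0 + \<epsilon>" if "\<epsilon> > 0" for \<epsilon>
  proof -
    define \<delta> where "\<delta> = \<epsilon> / (C + 1)"
    have \<delta>: "\<delta> > 0" using \<open>C \<ge> 0\<close> that by (simp add: \<delta>_def)
    obtain s where "0 < s"
      and est_vu: "\<bar>f (x + s *\<^sub>R v + s *\<^sub>R u) - f (x + s *\<^sub>R u) - f (x + s *\<^sub>R v) + f x - s\<^sup>2 * (D2 v \<bullet> u)\<bar>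
          \<le> \<delta> * s\<^sup>2 * ((2 * norm u + norm v) * norm u)"
      and est_uv: "\<bar>f (x + s *\<^sub>R u + s *\<^sub>R v) - f (x + s *\<^sub>R v) - f (x + s *\<^sub>R u) + f x - s\<^sup>2 * (D2 u \<bullet> v)\<bar>
          \<le> \<delta> * s\<^sup>2 * ((2 * norm v + norm u) * norm v)"
      using eventually_happens'[OF trivial_limit_at_right_real eventually_conj[OF eventually_at_right_less
          eventually_conj[OF mixed_difference_estimate[OF grad hess \<delta>, of v u]
                             mixed_difference_estimate[OF grad hess \<delta>, of u v]]]]
      by blast
    define \<Delta> where "\<Delta> = f (x + s *\<^sub>R v + s *\<^sub>R u) - f (x + s *\<^sub>R u) - f (x + s *\<^sub>R v) + f x"
    have "x + s *\<^sub>R u + s *\<^sub>R v = x + s *\<^sub>R v + s *\<^sub>R u" by (simp add: algebra_simps)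
    then have est: "\<bar>\<Delta> - s\<^sup>2 * (D2 v \<bullet> u)\<bar> \<le> \<delta> * s\<^sup>2 * ((2 * norm u + norm v) * norm u)"
        "\<bar>\<Delta> - s\<^sup>2 * (D2 u \<bullet> v)\<bar> \<le> \<delta> * s\<^sup>2 * ((2 * norm v + norm u) * norm v)"
      using est_vu est_uv by (simp_all add: \<Delta>_def algebra_simps)
    have "(\<Delta> - s\<^sup>2 * (D2 u \<bullet> v)) - (\<Delta> - s\<^sup>2 * (D2 v \<bullet> u)) = s\<^sup>2 * (D2 v \<bullet> u - D2 u \<bullet> v)"
      by (simp add: algebra_simps)
    then have "s\<^sup>2 * \<bar>D2 v \<bullet> u - D2 u \<bullet> v\<bar> = \<bar>(\<Delta> - s\<^sup>2 * (D2 u \<bullet> v)) - (\<Delta> - s\<^sup>2 * (D2 v \<bullet> u))\<bar>"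
      by (simp add: abs_mult)
    also have "\<dots> \<le> \<bar>\<Delta> - s\<^sup>2 * (D2 u \<bullet> v)\<bar> + \<bar>\<Delta> - s\<^sup>2 * (D2 v \<bullet> u)\<bar>"
      by (rule abs_triangle_ineq4)
    also have "\<dots> \<le> s\<^sup>2 * (\<delta> * C)"
      using est by (simp add: C_def algebra_simps)
    finally have "s\<^sup>2 * \<bar>D2 v \<bullet> u - D2 u \<bullet> v\<bar> \<le> s\<^sup>2 * (\<delta> * C)" .
    then have "\<bar>D2 v \<bullet> u - D2 u \<bullet> v\<bar> \<le> \<delta> * C"
      using \<open>0 < s\<close> by simp
    also have "\<dots> \<le> \<epsilon>"
      using \<open>C \<ge> 0\<close> that by (simp add: \<delta>_def field_simps)
    finally show ?thesis by simp
  qed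
  then have "\<bar>D2 v \<bullet> u - D2 u \<bullet> v\<bar> \<le> 0" by (rule field_le_epsilon)
  then show ?thesis by simp
qed

lemma hessian_sym_mat:
  fixes f :: "real^'n \<Rightarrow> real"
  assumes "\<forall>\<^sub>F y in nhds x. (f has_derivative (\<lambda>h. Df y \<bullet> h)) (at y)"
    and "(Df has_derivative (\<lambda>h. D2 *v h)) (at x)"
  shows "sym_mat D2"
proof -
  have "D2 $ i $ j = D2 $ j $ i" for i j
    using second_derivative_symmetric[OF assms, of "axis j 1" "axis i 1"]
    by (simp add: matrix_vector_mult_basis inner_axis column_def)
  then show ?thesis unfolding sym_mat_def transpose_def by (simp add: vec_eq_iff)
qed

section \<open>Radial functions and radial matrices\<close>

lemma norm_along_line_has_real_derivative:
  fixes d v :: "'a::real_inner"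
  assumes "d + s *\<^sub>R v \<noteq> 0"
  shows "((\<lambda>s. norm (d + s *\<^sub>R v)) has_real_derivative (d + s *\<^sub>R v) \<bullet> v / norm (d + s *\<^sub>R v)) (at s)"
  using has_real_derivative_along_line[OF has_derivative_norm[OF assms]]
  by (simp add: sgn_div_norm inner_commute divide_inverse_commute)

lemma radial_along_line_derivatives:
  fixes d v :: "'a::real_inner" and F Fd :: "real \<Rightarrow> real"
  assumes "d \<noteq> 0"
    and F: "\<forall>\<^sub>F \<rho> in nhds (norm d). (F has_real_derivative Fd \<rho>) (at \<rho>)"
    and Fd: "(Fd has_real_derivative F2) (at (norm d))"
  defines "f' \<equiv> \<lambda>s. Fd (norm (d + s *\<^sub>R v)) * ((d + s *\<^sub>R v) \<bullet> v / norm (d + s *\<^sub>R v))"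
  shows "\<forall>\<^sub>F s in nhds 0. ((\<lambda>s. F (norm (d + s *\<^sub>R v))) has_real_derivative f' s) (at s)"
    and "(f' has_real_derivative
           F2 * (d \<bullet> v / norm d)\<^sup>2 + Fd (norm d) * ((v \<bullet> v - (d \<bullet> v / norm d)\<^sup>2) / norm d)) (at 0)"
proof -
  have "((\<lambda>s. norm (d + s *\<^sub>R v)) \<longlongrightarrow> norm (d + 0 *\<^sub>R v)) (nhds 0)"
    by (intro tendsto_norm tendsto_add tendsto_const tendsto_scaleR filterlim_ident)
  then have "filterlim (\<lambda>s. norm (d + s *\<^sub>R v)) (nhds (norm d)) (nhds 0)"
    by simp
  moreover have "\<forall>\<^sub>F \<rho> in nhds (norm d). 0 < \<rho> \<and> (F has_real_derivative Fd \<rho>) (at \<rho>)"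
    using eventually_conj[OF eventually_nhds_in_open[of "{0<..}"] F] \<open>d \<noteq> 0\<close> by simp
  ultimately have "\<forall>\<^sub>F s in nhds 0. 0 < norm (d + s *\<^sub>R v) \<and>
      (F has_real_derivative Fd (norm (d + s *\<^sub>R v))) (at (norm (d + s *\<^sub>R v)))"
    by (rule eventually_compose_filterlim[rotated])
  then show "\<forall>\<^sub>F s in nhds 0. ((\<lambda>s. F (norm (d + s *\<^sub>R v))) has_real_derivative f' s) (at s)"
  proof eventually_elim
    case (elim s)
    then have "d + s *\<^sub>R v \<noteq> 0" by auto
    from DERIV_chain2[OF elim[THEN conjunct2] norm_along_line_has_real_derivative[OF this]]
    show ?case unfolding f'_def .
  qed
  have norm': "((\<lambda>s. norm (d + s *\<^sub>R v)) has_real_derivative d \<bullet> v / norm d) (at 0)"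
    using norm_along_line_has_real_derivative[of d 0 v] \<open>d \<noteq> 0\<close> by simp
  have "((\<lambda>s. d \<bullet> v + s * (v \<bullet> v)) has_real_derivative v \<bullet> v) (at 0)"
    by (auto intro!: derivative_eq_intros)
  then have "((\<lambda>s. (d + s *\<^sub>R v) \<bullet> v) has_real_derivative v \<bullet> v) (at 0)"
    by (simp add: inner_add_left)
  from DERIV_divide[OF this norm'] \<open>d \<noteq> 0\<close>
  have quot': "((\<lambda>s. (d + s *\<^sub>R v) \<bullet> v / norm (d + s *\<^sub>R v)) has_real_derivative
      (v \<bullet> v - (d \<bullet> v / norm d)\<^sup>2) / norm d) (at 0)"
    by (simp add: field_simps power2_eq_square)
  have "(Fd has_real_derivative F2) (at (norm (d + 0 *\<^sub>R v)))"
    using Fd by simp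
  from DERIV_mult[OF DERIV_chain2[OF this norm'] quot']
  show "(f' has_real_derivative
           F2 * (d \<bullet> v / norm d)\<^sup>2 + Fd (norm d) * ((v \<bullet> v - (d \<bullet> v / norm d)\<^sup>2) / norm d)) (at 0)"
    unfolding f'_def by (rule DERIV_cong) (simp add: power2_eq_square algebra_simps)
qed

lemma outer_mult_vec: "outer e *v v = (e \<bullet> v) *\<^sub>R e"
  for e v :: "real^'n"
  by (simp add: vec_eq_iff outer_def matrix_vector_mult_def inner_vec_def
      sum_distrib_left[symmetric] mult.assoc)

lemma sym_mat_radial: "sym_mat (\<alpha> *\<^sub>R outer e + \<gamma> *\<^sub>R (mat 1 - outer e))"
  by (simp add: sym_mat_def vec_eq_iff transpose_def outer_def mat_def mult.commute)

lemma sym_mat_outer_minus_id: "sym_mat (l *\<^sub>R outer e - mat 1)"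
  by (simp add: sym_mat_def vec_eq_iff transpose_def outer_def mat_def mult.commute)

lemma radial_quadratic_form:
  "v \<bullet> ((\<alpha> *\<^sub>R outer e + \<gamma> *\<^sub>R (mat 1 - outer e)) *v v) = \<alpha> * (e \<bullet> v)\<^sup>2 + \<gamma> * (v \<bullet> v - (e \<bullet> v)\<^sup>2)"
  for e v :: "real^'n"
  by (simp add: matrix_vector_mult_add_rdistrib matrix_vector_mult_diff_rdistrib
      scaleR_matrix_vector_assoc[symmetric] outer_mult_vec inner_add_right inner_diff_right
      power2_eq_square inner_commute)

lemma radial_matrix_rescale:
  assumes "\<theta> \<noteq> 0"
  shows "\<alpha> *\<^sub>R outer e + (- \<theta>) *\<^sub>R (mat 1 - outer e) = \<theta> *\<^sub>R ((\<alpha> / \<theta> + 1) *\<^sub>R outer e - mat 1)"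
  using assms by (simp add: vec_eq_iff outer_def mat_def field_simps)

lemma radial_touching_along_line:
  fixes \<phi> :: "real^'n \<Rightarrow> real" and F Fd :: "real \<Rightarrow> real"
  assumes max: "\<forall>\<^sub>F y in nhds x. F (dist y z) - \<phi> y \<le> F (dist x z) - \<phi> x"
    and grad: "\<forall>\<^sub>F y in nhds x. (\<phi> has_derivative (\<lambda>h. D\<phi> y \<bullet> h)) (at y)"
    and hess: "(D\<phi> has_derivative (\<lambda>h. D2 *v h)) (at x)"
    and "x \<noteq> z"
    and F: "\<forall>\<^sub>F \<rho> in nhds (dist x z). (F has_real_derivative Fd \<rho>) (at \<rho>)"
    and Fd: "(Fd has_real_derivative F2) (at (dist x z))"
  defines "r \<equiv> dist x z" and "e \<equiv> sgn (x - z)"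
  shows "D\<phi> x \<bullet> v = Fd r * (e \<bullet> v)"
    and "F2 * (e \<bullet> v)\<^sup>2 + Fd r * ((v \<bullet> v - (e \<bullet> v)\<^sup>2) / r) \<le> (D2 *v v) \<bullet> v"
proof -
  define d where "d = x - z"
  have "d \<noteq> 0" using \<open>x \<noteq> z\<close> by (simp add: d_def)
  have r: "norm d = r" "r > 0" using \<open>x \<noteq> z\<close> by (simp_all add: d_def r_def dist_norm)
  have e: "e \<bullet> v = d \<bullet> v / r" using r by (simp add: e_def d_def sgn_div_norm divide_inverse_commute)
  have "\<forall>\<^sub>F \<rho> in nhds (norm d). (F has_real_derivative Fd \<rho>) (at \<rho>)"
    "(Fd has_real_derivative F2) (at (norm d))"
    using F Fd r by (simp_all add: r_def)
  note derivs = radial_along_line_derivatives[OF \<open>d \<noteq> 0\<close> this, where v=v]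
  have "(\<lambda>s. F (dist (x + s *\<^sub>R v) z)) = (\<lambda>s. F (norm (d + s *\<^sub>R v)))"
    by (simp add: d_def dist_norm algebra_simps)
  with derivs(1) have first: "\<forall>\<^sub>F s in nhds 0. ((\<lambda>s. F (dist (x + s *\<^sub>R v) z)) has_real_derivative
      Fd (norm (d + s *\<^sub>R v)) * ((d + s *\<^sub>R v) \<bullet> v / norm (d + s *\<^sub>R v))) (at s)"
    by simp
  have second: "((\<lambda>s. Fd (norm (d + s *\<^sub>R v)) * ((d + s *\<^sub>R v) \<bullet> v / norm (d + s *\<^sub>R v)))
      has_real_derivative F2 * (e \<bullet> v)\<^sup>2 + Fd r * ((v \<bullet> v - (e \<bullet> v)\<^sup>2) / r)) (at 0)"
    using derivs(2) r unfolding e by simp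
  have "D\<phi> x \<bullet> v = Fd (norm (d + 0 *\<^sub>R v)) * ((d + 0 *\<^sub>R v) \<bullet> v / norm (d + 0 *\<^sub>R v))"
    using touching_along_line_first_order[OF max, of "\<lambda>h. D\<phi> x \<bullet> h"]
      eventually_nhds_x_imp_x[OF grad] eventually_nhds_x_imp_x[OF first]
    by blast
  then show "D\<phi> x \<bullet> v = Fd r * (e \<bullet> v)" using r e by simp
  show "F2 * (e \<bullet> v)\<^sup>2 + Fd r * ((v \<bullet> v - (e \<bullet> v)\<^sup>2) / r) \<le> (D2 *v v) \<bullet> v"
    by (rule touching_along_line_second_order[OF max grad hess first second])
qed

lemma radial_touching:
  fixes \<phi> :: "real^'n \<Rightarrow> real" and F Fd :: "real \<Rightarrow> real"
  assumes max: "\<forall>\<^sub>F y in nhds x. F (dist y z) - \<phi> y \<le> F (dist x z) - \<phi> x"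
    and grad: "\<forall>\<^sub>F y in nhds x. (\<phi> has_derivative (\<lambda>h. D\<phi> y \<bullet> h)) (at y)"
    and hess: "(D\<phi> has_derivative (\<lambda>h. D2 *v h)) (at x)"
    and "x \<noteq> z"
    and F: "\<forall>\<^sub>F \<rho> in nhds (dist x z). (F has_real_derivative Fd \<rho>) (at \<rho>)"
    and Fd: "(Fd has_real_derivative F2) (at (dist x z))"
  defines "r \<equiv> dist x z" and "e \<equiv> sgn (x - z)"
  shows "D\<phi> x = Fd r *\<^sub>R e"
    and "mat_le (F2 *\<^sub>R outer e + (Fd r / r) *\<^sub>R (mat 1 - outer e)) D2"
proof -
  note along_line = radial_touching_along_line[OF assms(1-6), folded r_def e_def]
  have "D\<phi> x \<bullet> v = (Fd r *\<^sub>R e) \<bullet> v" for v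
    using along_line(1)[of v] by simp
  then have "(D\<phi> x - Fd r *\<^sub>R e) \<bullet> (D\<phi> x - Fd r *\<^sub>R e) = 0"
    by (simp add: inner_diff_left)
  then show "D\<phi> x = Fd r *\<^sub>R e" by simp
  show "mat_le (F2 *\<^sub>R outer e + (Fd r / r) *\<^sub>R (mat 1 - outer e)) D2"
    unfolding mat_le_def
  proof
    fix v :: "real^'n"
    have "v \<bullet> ((F2 *\<^sub>R outer e + (Fd r / r) *\<^sub>R (mat 1 - outer e)) *v v) \<le> (D2 *v v) \<bullet> v"
      using along_line(2)[of v] by (simp add: radial_quadratic_form)
    then show "0 \<le> v \<bullet> ((D2 - (F2 *\<^sub>R outer e + (Fd r / r) *\<^sub>R (mat 1 - outer e))) *v v)"
      by (simp add: matrix_vector_mult_diff_rdistrib inner_diff_right inner_commute)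
  qed
qed

lemma condB_zero_gradient:
  assumes "condB H k1" and "sym_mat X"
  shows "H 0 X = 0"
proof -
  have "H ((0::real) *\<^sub>R 0) X = \<bar>0::real\<bar> powr k1 * H 0 X"
    using assms unfolding condB_def by blast
  then show ?thesis by simp
qed

lemma radial_operator_lower_bound:
  fixes H :: "real^'n \<Rightarrow> real^'n^'n \<Rightarrow> real"
  assumes B: "condB H k1"
    and N: "\<And>l e. norm e = 1 \<Longrightarrow> N \<le> H e (l *\<^sub>R outer e - mat 1)"
    and "norm e = 1" "q < 0" "r > 0"
  shows "\<bar>q\<bar> powr (k1 + 1) / r * N \<le> H (q *\<^sub>R e) (\<alpha> *\<^sub>R outer e + (q / r) *\<^sub>R (mat 1 - outer e))"
proof -
  define \<theta> where "\<theta> = \<bar>q\<bar> / r"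
  have \<theta>: "\<theta> > 0" unfolding \<theta>_def using \<open>q < 0\<close> \<open>r > 0\<close> by (intro divide_pos_pos) auto
  define M where "M = (\<alpha> / \<theta> + 1) *\<^sub>R outer e - mat 1"
  have "q / r = - \<theta>" by (simp add: \<theta>_def abs_of_neg[OF \<open>q < 0\<close>])
  then have "\<alpha> *\<^sub>R outer e + (q / r) *\<^sub>R (mat 1 - outer e) = \<theta> *\<^sub>R M"
    using radial_matrix_rescale[of \<theta> \<alpha> e] \<theta> by (simp add: M_def)
  then have "H (q *\<^sub>R e) (\<alpha> *\<^sub>R outer e + (q / r) *\<^sub>R (mat 1 - outer e)) = \<bar>q\<bar> powr k1 * (\<theta> * H e M)"
    using B \<theta> sym_mat_outer_minus_id sym_mat_radial unfolding condB_def M_def by metis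
  moreover have "\<bar>q\<bar> powr k1 * (\<theta> * N) \<le> \<bar>q\<bar> powr k1 * (\<theta> * H e M)"
    using N[OF \<open>norm e = 1\<close>] \<theta> by (simp add: M_def mult_left_mono)
  moreover have "\<bar>q\<bar> powr (k1 + 1) / r = \<bar>q\<bar> powr k1 * \<theta>"
    using \<open>q < 0\<close> by (simp add: powr_add \<theta>_def)
  ultimately show ?thesis by (simp add: mult.assoc)
qed

lemma INF_radial_operator_le:
  fixes H :: "real^'n \<Rightarrow> real^'n^'n \<Rightarrow> real"
  assumes Hcont: "continuous_on (UNIV \<times> {X. sym_mat X}) (\<lambda>(q,X). H q X)"
    and bdd: "bdd_below (range (\<lambda>l. INF e\<in>sphere 0 1. H e (l *\<^sub>R outer e - mat 1)))"
    and "norm e = 1"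
  shows "(INF l. INF e\<in>sphere 0 1. H e (l *\<^sub>R outer e - mat 1)) \<le> H e (l *\<^sub>R outer e - mat 1)"
proof -
  have "continuous_on (sphere 0 1) (\<lambda>e. (e, l *\<^sub>R outer e - mat 1))"
    unfolding outer_def by (intro continuous_intros)
  then have "continuous_on (sphere 0 1) (\<lambda>e. (\<lambda>(q,X). H q X) (e, l *\<^sub>R outer e - mat 1))"
    by (rule continuous_on_compose2[OF Hcont]) (auto simp: sym_mat_outer_minus_id)
  then have "compact ((\<lambda>e. H e (l *\<^sub>R outer e - mat 1)) ` sphere 0 1)"
    using compact_continuous_image by fastforce
  then have "bdd_below ((\<lambda>e. H e (l *\<^sub>R outer e - mat 1)) ` sphere 0 1)"
    by (intro bounded_imp_bdd_below compact_imp_bounded)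
  then have "(INF e\<in>sphere 0 1. H e (l *\<^sub>R outer e - mat 1)) \<le> H e (l *\<^sub>R outer e - mat 1)"
    by (rule cINF_lower) (simp add: \<open>norm e = 1\<close>)
  with cINF_lower[OF bdd] show ?thesis by (meson UNIV_I order_trans)
qed

section \<open>The radial barrier\<close>

lemma usc_on_if_continuous_on:
  assumes "continuous_on S f"
  shows "usc_on f S"
  unfolding usc_on_def
proof (intro ballI allI impI)
  fix p \<epsilon> assume "p \<in> S" "(\<epsilon>::real) > 0"
  with assms obtain \<delta> where "\<delta> > 0" "\<forall>q\<in>S. dist q p < \<delta> \<longrightarrow> dist (f q) (f p) < \<epsilon>"
    unfolding continuous_on_iff by blast
  then show "\<exists>\<delta>>0. \<forall>q\<in>S. dist q p < \<delta> \<longrightarrow> f q < f p + \<epsilon>"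
    unfolding dist_real_def abs_less_iff by (metis add.commute diff_less_eq)
qed

lemma has_real_derivative_zero_if_superlinear_bound:
  fixes h :: "real \<Rightarrow> real"
  assumes "a > 1" and bound: "\<forall>\<^sub>F s in nhds 0. \<bar>h s - h 0\<bar> \<le> C * \<bar>s\<bar> powr a"
  shows "(h has_real_derivative 0) (at 0)"
proof -
  have "\<forall>\<^sub>F s in at 0. norm ((h (0 + s) - h 0) / s) \<le> C * \<bar>s\<bar> powr (a - 1)"
    using bound unfolding eventually_at_filter
  proof eventually_elim
    case (elim s)
    show ?case
    proof
      assume "s \<noteq> 0"
      then have "\<bar>(h s - h 0) / s\<bar> \<le> C * (\<bar>s\<bar> powr a / \<bar>s\<bar>)"
        using elim by (simp add: abs_divide divide_right_mono)
      then show "s \<in> UNIV \<longrightarrow> norm ((h (0 + s) - h 0) / s) \<le> C * \<bar>s\<bar> powr (a - 1)"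
        using \<open>s \<noteq> 0\<close> by (simp add: powr_diff)
    qed
  qed
  moreover have "((\<lambda>s. C * \<bar>s\<bar> powr (a - 1)) \<longlongrightarrow> 0) (at 0)"
    by (intro tendsto_mult_right_zero tendsto_zero_powrI) (auto intro!: tendsto_eq_intros simp: \<open>a > 1\<close>)
  ultimately show ?thesis
    unfolding DERIV_def by (rule Lim_null_comparison)
qed

lemma one_minus_powr_le:
  fixes u b :: real
  assumes "0 \<le> u" "u \<le> 1" "0 < b" "b \<le> real n"
  shows "1 - (1 - u) powr b \<le> real n * u"
proof (cases "u = 1")
  case True
  then show ?thesis using assms by (cases n) auto
next
  case False
  then have "0 < 1 - u" "1 - u \<le> 1" using assms by auto
  then have "(1 - u) powr real n \<le> (1 - u) powr b"
    by (intro powr_mono') (use assms in auto)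
  then have "(1 - u) ^ n \<le> (1 - u) powr b"
    using \<open>0 < 1 - u\<close> by (simp add: powr_realpow)
  moreover have "1 + real n * (- u) \<le> (1 + (- u)) ^ n"
    using assms by (intro Bernoulli_inequality) auto
  ultimately show ?thesis by simp
qed

locale radial_barrier =
  fixes k \<mu> R N :: real
  assumes k_gt_1: "1 < k" and mu_pos: "0 < \<mu>" and R_pos: "0 < R" and N_neg: "N < 0"
begin

definition time_scale :: real where
  "time_scale = R powr (k + 1) / (((k + 1) / (k - 1)) powr k * \<mu> powr (k - 1) * (k - 1) * \<bar>N\<bar>)"

definition profile :: "real \<Rightarrow> real" where
  "profile r = \<mu> * (1 - (r / R) powr ((k + 1) / k)) powr (k / (k - 1))"

definition profile_deriv :: "real \<Rightarrow> real" where
  "profile_deriv r = - (\<mu> * ((k + 1) / (k - 1)) / R)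
      * (1 - (r / R) powr ((k + 1) / k)) powr (1 / (k - 1)) * (r / R) powr (1 / k)"

definition time_factor :: "real \<Rightarrow> real" where
  "time_factor t = (1 + t / time_scale) powr (- 1 / (k - 1))"

definition barrier :: "real^'n \<Rightarrow> real^'n \<Rightarrow> real \<Rightarrow> real" where
  "barrier z x t = profile (dist x z) * time_factor t"

lemma time_scale_pos: "0 < time_scale"
  unfolding time_scale_def using k_gt_1 mu_pos R_pos N_neg by (intro divide_pos_pos mult_pos_pos) auto

lemma time_base_pos:
  assumes "0 \<le> t"
  shows "0 < 1 + t / time_scale"
proof -
  have "0 \<le> t / time_scale" using assms time_scale_pos by simp
  then show ?thesis by linarith
qed

lemma time_factor_pos: "0 \<le> t \<Longrightarrow> 0 < time_factor t"
  by (auto simp: time_factor_def dest: time_base_pos)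

lemma radius_powr_lt_1:
  assumes "0 \<le> r" "r < R"
  shows "(r / R) powr ((k + 1) / k) < 1"
proof -
  have "(r / R) powr ((k + 1) / k) < 1 powr ((k + 1) / k)"
    using assms R_pos k_gt_1 by (intro powr_less_mono2) auto
  then show ?thesis by simp
qed

lemma profile_center: "profile 0 = \<mu>"
  using R_pos k_gt_1 by (simp add: profile_def)

lemma profile_has_real_derivative:
  assumes "0 < r" "r < R"
  shows "(profile has_real_derivative profile_deriv r) (at r)"
proof -
  have base: "0 < r / R" "(r / R) powr ((k + 1) / k) < 1"
    using assms R_pos radius_powr_lt_1[of r] by auto
  have exps: "k / (k - 1) - 1 = 1 / (k - 1)" "(k + 1) / k - 1 = 1 / k"
    "k / (k - 1) * ((k + 1) / k) = (k + 1) / (k - 1)"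
    using k_gt_1 by (simp_all add: field_simps)
  have "(profile has_real_derivative \<mu> * (k / (k - 1) * (1 - (r / R) powr ((k + 1) / k)) powr (k / (k - 1) - 1)
      * (- ((k + 1) / k * (r / R) powr ((k + 1) / k - 1) / R)))) (at r)"
    unfolding profile_def fun_eq_iff
    by (rule derivative_eq_intros refl | use base R_pos in simp)+
  then show ?thesis
    by (rule DERIV_cong) (simp only: profile_deriv_def exps(1,2) exps(3)[symmetric], simp add: field_simps)
qed

lemma profile_deriv_differentiable:
  assumes "0 < r" "r < R"
  shows "profile_deriv differentiable (at r)"
proof -
  have base: "0 < r / R" "(r / R) powr ((k + 1) / k) < 1"
    using assms R_pos radius_powr_lt_1[of r] by auto
  show ?thesis
    unfolding real_differentiable_def profile_deriv_def
    by (intro exI derivative_eq_intros refl) (use base R_pos in simp_all)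
qed

lemma profile_deriv_neg:
  assumes "0 < r" "r < R"
  shows "profile_deriv r < 0"
proof -
  have "0 < 1 - (r / R) powr ((k + 1) / k)"
    using radius_powr_lt_1[of r] assms by simp
  then show ?thesis
    using assms mu_pos R_pos k_gt_1 unfolding profile_deriv_def
    by (intro mult_neg_pos) (auto intro!: divide_pos_pos)
qed

text \<open>Together with \<open>time_factor_has_real_derivative\<close> this is the separation of variables
  \<open>F G' = \<bar>F' G\<bar>\<^sup>k N / r\<close>; it is what fixes the constants in \<open>time_scale\<close>.\<close>

lemma profile_equation:
  assumes "0 < r" "r < R"
  shows "\<bar>profile_deriv r\<bar> powr k / r * N = - profile r / ((k - 1) * time_scale)"
proof -
  define U where "U = 1 - (r / R) powr ((k + 1) / k)"
  define V where "V = U powr (k / (k - 1))"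
  define c where "c = ((k + 1) / (k - 1)) powr k"
  define P where "P = \<mu> powr (k - 1)"
  define Q where "Q = R powr k"
  have U: "0 < U" using radius_powr_lt_1[of r] assms by (simp add: U_def)
  have nonzero: "c \<noteq> 0" "P \<noteq> 0" "Q \<noteq> 0" "k - 1 \<noteq> 0"
    using mu_pos R_pos k_gt_1 by (simp_all add: c_def P_def Q_def)
  have "\<mu> powr k = \<mu> * P"
    using powr_add[of \<mu> 1 "k - 1"] mu_pos by (simp add: P_def)
  moreover have "\<bar>profile_deriv r\<bar> = (\<mu> * ((k + 1) / (k - 1)) / R) * U powr (1 / (k - 1)) * (r / R) powr (1 / k)"
    using mu_pos R_pos k_gt_1 by (simp add: profile_deriv_def U_def abs_mult)
  ultimately have pd: "\<bar>profile_deriv r\<bar> powr k = \<mu> * P * c / Q * V * (r / R)"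
    using mu_pos R_pos k_gt_1 assms U
    by (simp add: powr_mult powr_divide powr_powr c_def Q_def V_def)
  have ts: "time_scale = Q * R / (c * P * (k - 1) * - N)"
    using powr_add[of R k 1] R_pos N_neg by (simp add: time_scale_def c_def P_def Q_def)
  have prof: "profile r = \<mu> * V"
    by (simp add: profile_def U_def V_def)
  show ?thesis
    unfolding pd ts prof using nonzero assms R_pos N_neg by (simp add: field_simps)
qed

lemma time_factor_has_real_derivative:
  assumes "0 \<le> t"
  shows "(time_factor has_real_derivative (- (time_factor t powr k) / ((k - 1) * time_scale))) (at t)"
proof -
  have L: "0 < 1 + t / time_scale" by (rule time_base_pos[OF assms])
  have "(time_factor has_real_derivative (- 1 / (k - 1)) * (1 + t / time_scale) powr (- 1 / (k - 1) - 1)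
      * (1 / time_scale)) (at t)"
    unfolding time_factor_def fun_eq_iff
    by (rule derivative_eq_intros refl | use L time_scale_pos in simp)+
  moreover have "- 1 / (k - 1) - 1 = - 1 / (k - 1) * k" using k_gt_1 by (simp add: field_simps)
  ultimately show ?thesis
    using L by (simp add: time_factor_def powr_powr)
qed

lemma profile_flat_at_center: "((\<lambda>s. profile (norm (s *\<^sub>R v))) has_real_derivative 0) (at 0)"
proof -
  define a where "a = (k + 1) / k"
  define n where "n = nat \<lceil>k / (k - 1)\<rceil>"
  have "a > 1" using k_gt_1 by (simp add: a_def)
  have "((\<lambda>s. norm (s *\<^sub>R v)) \<longlongrightarrow> norm (0 *\<^sub>R v)) (nhds 0)"
    by (intro tendsto_norm tendsto_scaleR filterlim_ident tendsto_const)
  then have "\<forall>\<^sub>F s in nhds 0. norm (s *\<^sub>R v) < R"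
    using order_tendstoD(2)[of _ 0 _ R] R_pos by simp
  then have "\<forall>\<^sub>F s in nhds 0. \<bar>profile (norm (s *\<^sub>R v)) - profile (norm (0 *\<^sub>R v))\<bar>
      \<le> (\<mu> * n * (norm v / R) powr a) * \<bar>s\<bar> powr a"
  proof eventually_elim
    case (elim s)
    define u where "u = (norm (s *\<^sub>R v) / R) powr a"
    have u: "0 \<le> u" "u \<le> 1"
      using elim R_pos radius_powr_lt_1[of "norm (s *\<^sub>R v)"] by (simp_all add: u_def a_def)
    have "(1 - u) powr (k / (k - 1)) \<le> 1"
      using u k_gt_1 by (intro powr_le1) auto
    then have "\<bar>profile (norm (s *\<^sub>R v)) - profile (norm (0 *\<^sub>R v))\<bar> = \<mu> * (1 - (1 - u) powr (k / (k - 1)))"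
      using mu_pos profile_center by (simp add: profile_def u_def a_def abs_mult right_diff_distrib)
    also have "\<dots> \<le> \<mu> * (n * u)"
      using one_minus_powr_le[OF u, of "k / (k - 1)" n] mu_pos k_gt_1
      by (simp add: n_def real_nat_ceiling_ge)
    also have "u = (norm v / R) powr a * \<bar>s\<bar> powr a"
      using R_pos by (simp add: u_def powr_mult[symmetric] mult.commute)
    finally show ?case by (simp add: mult_ac)
  qed
  then show ?thesis
    by (rule has_real_derivative_zero_if_superlinear_bound[OF \<open>a > 1\<close>])
qed

lemma barrier_continuous_on: "continuous_on (ball z R \<times> {0..}) (\<lambda>(x, t). barrier z x t)"
proof -
  have "continuous_on {0..<R} profile"
    unfolding profile_def using R_pos k_gt_1 radius_powr_lt_1
    by (intro continuous_intros continuous_on_powr') (auto simp: less_imp_le)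
  then have "continuous_on (ball z R \<times> {0..}) (\<lambda>p. profile (dist (fst p) z))"
    by (rule continuous_on_compose2) (auto intro!: continuous_intros simp: dist_commute less_imp_le)
  moreover have "continuous_on (ball z R \<times> {0..}) (\<lambda>p. time_factor (snd p))"
    unfolding time_factor_def using time_scale_pos
    by (intro continuous_intros) (auto dest: time_base_pos)
  ultimately show ?thesis
    unfolding barrier_def case_prod_beta' by (intro continuous_intros)
qed

lemma barrier_time_derivative:
  assumes "0 \<le> t"
  shows "((barrier z x) has_real_derivative
           profile (dist x z) * (- (time_factor t powr k) / ((k - 1) * time_scale))) (at t)"
  unfolding barrier_def by (rule DERIV_cmult[OF time_factor_has_real_derivative[OF assms]])

lemma barrier_gradient_at_center:
  fixes \<psi> :: "real^'n \<Rightarrow> real"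
  assumes max: "\<forall>\<^sub>F y in nhds z. barrier z y t - \<psi> y \<le> barrier z z t - \<psi> z"
    and grad: "(\<psi> has_derivative (\<lambda>h. D\<psi> \<bullet> h)) (at z)"
  shows "D\<psi> = 0"
proof -
  have "D\<psi> \<bullet> v = 0" for v
  proof -
    have "(\<lambda>s. barrier z (z + s *\<^sub>R v) t) = (\<lambda>s. profile (norm (s *\<^sub>R v)) * time_factor t)"
      by (simp add: barrier_def dist_norm)
    then have "((\<lambda>s. barrier z (z + s *\<^sub>R v) t) has_real_derivative 0 * time_factor t) (at 0)"
      using DERIV_cmult_right[OF profile_flat_at_center] by metis
    then show ?thesis
      using touching_along_line_first_order[OF max grad] by simp
  qed
  from this[of D\<psi>] show ?thesis by simp
qed

lemma barrier_off_center_bound: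
  fixes H :: "real^'n \<Rightarrow> real^'n^'n \<Rightarrow> real" and \<psi> :: "real^'n \<Rightarrow> real"
  assumes A: "condA H" and B: "condB H (k - 1)"
    and N: "\<And>l e. norm e = 1 \<Longrightarrow> N \<le> H e (l *\<^sub>R outer e - mat 1)"
    and "x \<noteq> z" "dist x z < R" "0 \<le> t"
    and max: "\<forall>\<^sub>F y in nhds x. barrier z y t - \<psi> y \<le> barrier z x t - \<psi> x"
    and grad: "\<forall>\<^sub>F y in nhds x. (\<psi> has_derivative (\<lambda>h. D\<psi> y \<bullet> h)) (at y)"
    and hess: "(D\<psi> has_derivative (\<lambda>h. D2 *v h)) (at x)"
  shows "profile (dist x z) * (- (time_factor t powr k) / ((k - 1) * time_scale)) \<le> H (D\<psi> x) D2"
proof -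
  define r where "r = dist x z"
  define G where "G = time_factor t"
  define e where "e = sgn (x - z)"
  define q where "q = profile_deriv r * G"
  have r: "0 < r" "r < R" using \<open>x \<noteq> z\<close> \<open>dist x z < R\<close> by (simp_all add: r_def)
  have "G > 0" using time_factor_pos[OF \<open>0 \<le> t\<close>] by (simp add: G_def)
  have "q < 0" using profile_deriv_neg[OF r] \<open>G > 0\<close> by (simp add: q_def mult_neg_pos)
  have "norm e = 1" using \<open>x \<noteq> z\<close> by (simp add: e_def norm_sgn)
  have "\<forall>\<^sub>F \<rho> in nhds r. \<rho> \<in> {0<..<R}" using r by (intro eventually_nhds_in_open) auto
  then have F': "\<forall>\<^sub>F \<rho> in nhds r. ((\<lambda>\<rho>. profile \<rho> * G) has_real_derivative profile_deriv \<rho> * G) (at \<rho>)"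
    by eventually_elim (simp add: DERIV_cmult_right profile_has_real_derivative)
  obtain F2 where "(profile_deriv has_real_derivative F2) (at r)"
    using profile_deriv_differentiable[OF r] by (auto simp: real_differentiable_def)
  then have Fd': "((\<lambda>\<rho>. profile_deriv \<rho> * G) has_real_derivative F2 * G) (at r)"
    by (rule DERIV_cmult_right)
  define M where "M = (F2 * G) *\<^sub>R outer e + (q / r) *\<^sub>R (mat 1 - outer e)"
  have max': "\<forall>\<^sub>F y in nhds x. profile (dist y z) * G - \<psi> y \<le> profile (dist x z) * G - \<psi> x"
    using max by (simp add: barrier_def G_def)
  note touch = radial_touching[OF max' grad hess \<open>x \<noteq> z\<close> F'[unfolded r_def] Fd'[unfolded r_def]]
  have "D\<psi> x = q *\<^sub>R e" using touch(1) by (simp add: q_def r_def e_def)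
  moreover have "mat_le M D2" using touch(2) by (simp add: M_def q_def r_def e_def)
  moreover have "sym_mat D2" by (rule hessian_sym_mat[OF grad hess])
  ultimately have mono: "H (q *\<^sub>R e) M \<le> H (D\<psi> x) D2"
    using A sym_mat_radial unfolding condA_def M_def by metis
  have "profile r * (- (G powr k) / ((k - 1) * time_scale)) = (\<bar>profile_deriv r\<bar> powr k / r * N) * G powr k"
    using profile_equation[OF r] by simp
  also have "\<dots> = \<bar>q\<bar> powr (k - 1 + 1) / r * N"
    using \<open>G > 0\<close> by (simp add: q_def abs_mult powr_mult)
  also have "\<dots> \<le> H (q *\<^sub>R e) M"
    unfolding M_def by (rule radial_operator_lower_bound[OF B N \<open>norm e = 1\<close> \<open>q < 0\<close> \<open>0 < r\<close>])
  finally show ?thesis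
    using mono by (simp add: r_def G_def)
qed

lemma barrier_subsolution_inequality:
  fixes H :: "real^'n \<Rightarrow> real^'n^'n \<Rightarrow> real" and \<psi> :: "real^'n \<Rightarrow> real" and \<eta> :: "real \<Rightarrow> real"
  assumes A: "condA H" and B: "condB H (k - 1)"
    and N: "\<And>l e. norm e = 1 \<Longrightarrow> N \<le> H e (l *\<^sub>R outer e - mat 1)"
    and "dist x z < R" "0 \<le> t"
    and max_x: "\<forall>\<^sub>F y in nhds x. barrier z y t - \<psi> y \<le> barrier z x t - \<psi> x"
    and max_t: "\<forall>\<^sub>F s in nhds t. barrier z x s - \<eta> s \<le> barrier z x t - \<eta> t"
    and grad: "\<forall>\<^sub>F y in nhds x. (\<psi> has_derivative (\<lambda>h. D\<psi> y \<bullet> h)) (at y)"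
    and hess: "(D\<psi> has_derivative (\<lambda>h. D2 *v h)) (at x)"
    and \<eta>: "(\<eta> has_real_derivative \<eta>') (at t)"
  shows "\<eta>' \<le> H (D\<psi> x) D2"
proof -
  define \<tau> where "\<tau> = - (time_factor t powr k) / ((k - 1) * time_scale)"
  have \<eta>': "\<eta>' = profile (dist x z) * \<tau>"
    using DERIV_local_max_diff[OF max_t barrier_time_derivative[OF \<open>0 \<le> t\<close>] \<eta>] by (simp add: \<tau>_def)
  show ?thesis
  proof (cases "x = z")
    case True
    have "D\<psi> z = 0"
      using max_x eventually_nhds_x_imp_x[OF grad] unfolding True
      by (rule barrier_gradient_at_center)
    then have "D\<psi> x = 0" by (simp add: True)
    moreover have "\<tau> \<le> 0"
      using time_scale_pos k_gt_1 by (simp add: \<tau>_def)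
    ultimately show ?thesis
      using \<eta>' True profile_center mu_pos condB_zero_gradient[OF B hessian_sym_mat[OF grad hess]]
      by (simp add: mult_nonneg_nonpos)
  next
    case False
    then show ?thesis
      using barrier_off_center_bound[OF A B N False \<open>dist x z < R\<close> \<open>0 \<le> t\<close> max_x grad hess] \<eta>'
      by (simp add: \<tau>_def)
  qed
qed

lemma barrier_visc_subsol:
  fixes H :: "real^'n \<Rightarrow> real^'n^'n \<Rightarrow> real"
  assumes A: "condA H" and B: "condB H (k - 1)"
    and N: "\<And>l e. norm e = 1 \<Longrightarrow> N \<le> H e (l *\<^sub>R outer e - mat 1)"
  shows "visc_subsol H (barrier z) (ball z R) T"
  unfolding visc_subsol_def
proof (intro conjI allI impI)
  show "usc_on (\<lambda>(x, t). barrier z x t) (ball z R \<times> {0<..<T})"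
    by (rule usc_on_if_continuous_on[OF continuous_on_subset[OF barrier_continuous_on]]) auto
next
  fix x0 t0 \<phi> D\<phi> D2\<phi> \<phi>t U
  assume "x0 \<in> ball z R \<and> t0 \<in> {0<..<T} \<and> (x0, t0) \<in> U \<and> test_fun \<phi> D\<phi> D2\<phi> \<phi>t U \<and>
    (\<forall>(x, t)\<in>U \<inter> (ball z R \<times> {0<..<T}). barrier z x t - \<phi> x t \<le> barrier z x0 t0 - \<phi> x0 t0)"
  then have x0: "dist x0 z < R" and t0: "0 < t0" "t0 < T" and "(x0, t0) \<in> U"
    and "open U" and deriv: "\<And>x t. (x, t) \<in> U \<Longrightarrow>
        ((\<lambda>y. \<phi> y t) has_derivative (\<lambda>h. D\<phi> x t \<bullet> h)) (at x) \<and>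
        ((\<lambda>y. D\<phi> y t) has_derivative (\<lambda>h. D2\<phi> x t *v h)) (at x) \<and>
        ((\<lambda>s. \<phi> x s) has_real_derivative \<phi>t x t) (at t)"
    and max: "\<And>x t. (x, t) \<in> U \<inter> (ball z R \<times> {0<..<T}) \<Longrightarrow>
        barrier z x t - \<phi> x t \<le> barrier z x0 t0 - \<phi> x0 t0"
    unfolding test_fun_def by (auto simp: dist_commute)
  have "\<forall>\<^sub>F p in nhds (x0, t0). p \<in> U \<inter> (ball z R \<times> {0<..<T})"
    using \<open>open U\<close> \<open>(x0, t0) \<in> U\<close> x0 t0
    by (intro eventually_nhds_in_open) (auto simp: open_Times dist_commute)
  note slices = eventually_nhds_Pair_slices[OF this]
  have "\<phi>t x0 t0 \<le> H (D\<phi> x0 t0) (D2\<phi> x0 t0)"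
  proof (rule barrier_subsolution_inequality[OF A B N x0 less_imp_le[OF t0(1)]])
    show "\<forall>\<^sub>F y in nhds x0. barrier z y t0 - \<phi> y t0 \<le> barrier z x0 t0 - \<phi> x0 t0"
      using slices(1) by eventually_elim (rule max)
    show "\<forall>\<^sub>F s in nhds t0. barrier z x0 s - \<phi> x0 s \<le> barrier z x0 t0 - \<phi> x0 t0"
      using slices(2) by eventually_elim (rule max)
    show "\<forall>\<^sub>F y in nhds x0. ((\<lambda>y. \<phi> y t0) has_derivative (\<lambda>h. D\<phi> y t0 \<bullet> h)) (at y)"
      using slices(1) by eventually_elim (use deriv in blast)
  qed (use deriv[OF \<open>(x0, t0) \<in> U\<close>] in auto)
  then show "0 \<le> H (D\<phi> x0 t0) (D2\<phi> x0 t0) - \<phi>t x0 t0" by simp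
qed

end

theorem mainTheorem10:
  fixes H :: "real^'n \<Rightarrow> real^'n^'n \<Rightarrow> real"
    and k1 k \<mu> R N c E :: real and z :: "real^'n"
    and w :: "real^'n \<Rightarrow> real \<Rightarrow> real"
  assumes Hcont: "continuous_on (UNIV \<times> {X. sym_mat X}) (\<lambda>(q,X). H q X)"
    and A: "condA H" and B: "condB H k1" and C: "condC H"
    and k_def: "k = k1 + 1" and k_gt: "k > 1"
    and N_def: "N = (INF l. INF e\<in>sphere 0 1. H e (l *\<^sub>R outer e - mat 1))"
    and N_fin: "bdd_below (range (\<lambda>l. INF e\<in>sphere 0 1. H e (l *\<^sub>R outer e - mat 1)))"
    and N_neg: "N < 0"
    and mu_pos: "\<mu> > 0" and R_pos: "R > 0"
    and c_def: "c = ((k + 1) / (k - 1)) powr k"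
    and E_def: "E = R powr (k + 1) / (c * \<mu> powr (k - 1) * (k - 1) * \<bar>N\<bar>)"
    and w_def: "\<And>x t. w x t =
        \<mu> * (1 - (dist x z / R) powr ((k + 1) / k)) powr (k / (k - 1))
          / (1 + t / E) powr (1 / (k - 1))"
  shows "(\<forall>x\<in>cball z R. \<forall>t\<ge>0. w x t \<ge> 0)
       \<and> (\<forall>x t. dist x z = R \<longrightarrow> w x t = 0)
       \<and> (\<forall>t. w z t = \<mu> * (1 + t / E) powr (- 1 / (k - 1)))
       \<and> (\<forall>T>0. visc_subsol H w (ball z R) T)"
proof -
  interpret radial_barrier k \<mu> R N
    using k_gt mu_pos R_pos N_neg by unfold_locales
  have exponent: "- 1 / (k - 1) = - (1 / (k - 1))" by simp
  have "w = barrier z"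
    using E_def c_def
    by (simp add: fun_eq_iff w_def barrier_def profile_def time_factor_def time_scale_def
        exponent powr_minus_divide)
  moreover have "\<And>l e. norm e = 1 \<Longrightarrow> N \<le> H e (l *\<^sub>R outer e - mat 1)"
    using INF_radial_operator_le[OF Hcont N_fin] N_def by simp
  moreover have "condB H (k - 1)" using B k_def by simp
  ultimately have "visc_subsol H w (ball z R) T" for T
    using barrier_visc_subsol[OF A] by simp
  moreover have "w z t = \<mu> * (1 + t / E) powr (- 1 / (k - 1))" for t
    using k_gt by (simp add: w_def exponent powr_minus_divide)
  ultimately show ?thesis
    using mu_pos R_pos k_gt by (simp add: w_def)
qed

end
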